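(* Let $V\in C^2(\mathbb{R})$ be even with $V(s)\ge As^2-B$ for all $s\in\mathbb{R}$ (some $A>0$, $B\in\mathbb{R}$) and $V''(s)\le C_2$ for all $s$ (some $C_2>0$). Then there exists a constant $C>0$ such that for every $x\in\mathbb{Z}^d$, every $\gamma\in\mathbb{R}$, every $\xi(x)\in\mathbb{R}$ and every choice of real values $\phi(y)$ for the $2d$ nearest neighbours $y$ of $x$, $$\int_{\mathbb{R}}\exp\Big[-\tfrac12\sum_{y\in\mathbb{Z}^d,|y-x|=1}V(\phi(y)-\phi(x))+\xi(x)\phi(x)\Big]\mathrm{d}\phi(x)\ \ge\ C\exp\Big[-\tfrac12\sum_{y\in\mathbb{Z}^d,|y-x|=1}V(\phi(y)-\gamma)+\xi(x)\gamma\Big].$$ *)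

theory Defs
  imports "HOL-Analysis.Analysis"
begin

definition nbrs :: "int ^ 'd \<Rightarrow> (int ^ 'd) set" where
  "nbrs x = {y. sqrt (\<Sum>i\<in>UNIV. (real_of_int (y $ i - x $ i))\<^sup>2) = 1}"

end

theory Submission
  imports Defs
begin

text \<open>Substitute \<open>\<phi>(x) = \<gamma> \<pm> h\<close> and pair the two points. By Taylor's formula the bound
  \<open>V'' \<le> C2\<close> makes the exponent \<open>F\<close> semiconcave,
  \<open>F(\<gamma>+h) + F(\<gamma>-h) \<ge> 2 (F(\<gamma>) - K h\<^sup>2)\<close> with \<open>K = (card S) C2 / 4\<close>, so by convexity of
  \<open>exp\<close> the symmetrised integrand is at least \<open>2 exp (F \<gamma> - K)\<close> for \<open>h \<in> [0,1]\<close>. Since every site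
  has the same number of neighbours, \<open>K\<close> is uniform.\<close>

lemma second_difference_le:
  fixes V :: "real \<Rightarrow> real"
  assumes diff1: "\<forall>s. V differentiable (at s)"
    and diff2: "\<forall>s. deriv V differentiable (at s)"
    and upper2: "\<forall>s. deriv (deriv V) s \<le> C"
  shows "V (s + h) + V (s - h) \<le> 2 * V s + C * h\<^sup>2"
proof -
  define D where "D = (\<lambda>m::nat. if m = 0 then V else if m = 1 then deriv V else deriv (deriv V))"
  have DER: "\<forall>m t. m < 2 \<and> a \<le> t \<and> t \<le> b \<longrightarrow> DERIV (D m) t :> D (Suc m) t" for a b
    using diff1 diff2 by (auto simp: D_def DERIV_deriv_iff_real_differentiable less_2_cases_iff)
  have taylor: "V x \<le> V s + deriv V s * (x - s) + C / 2 * (x - s)\<^sup>2" for x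
  proof (cases "x = s")
    case False
    from Taylor[of 2 D V "min x s" "max x s" s x, OF _ _ DER] False
    obtain t where "V x = (\<Sum>m<2. (D m s / fact m) * (x - s)^m) + (D 2 t / fact 2) * (x - s)^2"
      by (auto simp: D_def)
    then have "V x = V s + deriv V s * (x - s) + deriv (deriv V) t / 2 * (x - s)\<^sup>2"
      by (simp add: D_def numeral_2_eq_2)
    moreover have "deriv (deriv V) t / 2 * (x - s)\<^sup>2 \<le> C / 2 * (x - s)\<^sup>2"
      using upper2 by (intro mult_right_mono) auto
    ultimately show ?thesis by linarith
  qed simp
  from taylor[of "s + h"] taylor[of "s - h"] show ?thesis
    by (simp add: power2_eq_square algebra_simps)
qed

lemma exp_midpoint_le: "2 * exp ((a + b) / 2) \<le> exp a + exp (b :: real)"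
proof -
  have "0 \<le> (exp (a / 2) - exp (b / 2))\<^sup>2" by simp
  also have "\<dots> = exp a + exp b - 2 * exp ((a + b) / 2)"
    by (simp add: power2_eq_square algebra_simps flip: exp_add)
  finally show ?thesis by simp
qed

lemma nn_integral_lborel_ge_of_symmetric_bound:
  fixes f :: "real \<Rightarrow> ennreal"
  assumes f [measurable]: "f \<in> borel_measurable borel"
    and bound: "\<And>h. h \<in> {0..1} \<Longrightarrow> 2 * m \<le> f (c + h) + f (c - h)"
  shows "m \<le> (\<integral>\<^sup>+ t. f t \<partial>lborel)"
proof -
  define I where "I = (\<integral>\<^sup>+ t. f t \<partial>lborel)"
  have plus: "I = (\<integral>\<^sup>+ h. f (c + h) \<partial>lborel)"
    unfolding I_def using nn_integral_real_affine[OF f, of 1 c] by simp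
  have minus: "I = (\<integral>\<^sup>+ h. f (c - h) \<partial>lborel)"
    unfolding I_def using nn_integral_real_affine[OF f, of "-1" c] by simp
  have "2 * m = (\<integral>\<^sup>+ h. 2 * m * indicator {0..1::real} h \<partial>lborel)"
    by (subst nn_integral_cmult_indicator) simp_all
  also have "\<dots> \<le> (\<integral>\<^sup>+ h. f (c + h) + f (c - h) \<partial>lborel)"
    by (intro nn_integral_mono) (auto simp: indicator_def bound)
  also have "\<dots> = I + I"
    by (simp add: nn_integral_add flip: plus minus)
  finally have "2 * m \<le> 2 * I"
    by (simp add: mult_2)
  then show ?thesis
    unfolding I_def by (simp add: ennreal_mult_le_mult_iff)
qed

lemma nn_integral_exp_ge_of_semiconcave:
  fixes F :: "real \<Rightarrow> real"
  assumes [measurable]: "F \<in> borel_measurable borel"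
    and "K \<ge> 0"
    and semiconcave: "\<And>h. 2 * (F c - K * h\<^sup>2) \<le> F (c + h) + F (c - h)"
  shows "ennreal (exp (- K) * exp (F c)) \<le> (\<integral>\<^sup>+ t. exp (F t) \<partial>lborel)"
proof (rule nn_integral_lborel_ge_of_symmetric_bound)
  fix h :: real
  assume "h \<in> {0..1}"
  then have "K * h\<^sup>2 \<le> K"
    using \<open>K \<ge> 0\<close> by (simp add: mult_left_le power_le_one)
  then have "F c - K \<le> (F (c + h) + F (c - h)) / 2"
    using semiconcave[of h] by (simp add: field_simps)
  then have "2 * exp (F c - K) \<le> exp (F (c + h)) + exp (F (c - h))"
    using exp_midpoint_le[of "F (c + h)" "F (c - h)"] by (smt (verit) exp_le_cancel_iff)
  then have "ennreal (2 * exp (F c - K)) \<le> ennreal (exp (F (c + h))) + ennreal (exp (F (c - h)))"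
    by (simp add: ennreal_leI flip: ennreal_plus)
  moreover have "exp (- K) * exp (F c) = exp (F c - K)"
    by (simp add: exp_diff exp_minus field_simps)
  ultimately show "2 * ennreal (exp (- K) * exp (F c)) \<le> ennreal (exp (F (c + h))) + ennreal (exp (F (c - h)))"
    by (simp only:) (simp add: ennreal_mult')
qed measurable

lemma sum_second_difference_le:
  fixes V :: "real \<Rightarrow> real"
  assumes diff1: "\<forall>s. V differentiable (at s)"
    and diff2: "\<forall>s. deriv V differentiable (at s)"
    and upper2: "\<forall>s. deriv (deriv V) s \<le> C"
  shows "(\<Sum>y\<in>S. V (\<phi> y - (c + h))) + (\<Sum>y\<in>S. V (\<phi> y - (c - h)))
           \<le> 2 * (\<Sum>y\<in>S. V (\<phi> y - c)) + real (card S) * C * h\<^sup>2"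
proof -
  have "(\<Sum>y\<in>S. V (\<phi> y - c + - h) + V (\<phi> y - c - - h)) \<le> (\<Sum>y\<in>S. 2 * V (\<phi> y - c) + C * (- h)\<^sup>2)"
    by (intro sum_mono second_difference_le[OF diff1 diff2 upper2])
  then show ?thesis
    by (simp add: sum.distrib sum_distrib_left algebra_simps)
qed

lemma nn_integral_local_weight_ge:
  fixes V :: "real \<Rightarrow> real" and \<phi> :: "'a \<Rightarrow> real"
  assumes diff1: "\<forall>s. V differentiable (at s)"
    and diff2: "\<forall>s. deriv V differentiable (at s)"
    and C_nonneg: "C \<ge> 0"
    and upper2: "\<forall>s. deriv (deriv V) s \<le> C"
  shows "ennreal (exp (- (real (card S) * C / 4)) * exp (- (1/2) * (\<Sum>y\<in>S. V (\<phi> y - \<gamma>)) + \<xi> * \<gamma>))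
           \<le> (\<integral>\<^sup>+ t. ennreal (exp (- (1/2) * (\<Sum>y\<in>S. V (\<phi> y - t)) + \<xi> * t)) \<partial>lborel)"
proof (rule nn_integral_exp_ge_of_semiconcave)
  have "continuous_on UNIV V"
    using diff1 by (intro continuous_at_imp_continuous_on) (auto intro: differentiable_imp_continuous_within)
  then have [measurable]: "V \<in> borel_measurable borel"
    by (rule borel_measurable_continuous_onI)
  show "(\<lambda>t. - (1/2) * (\<Sum>y\<in>S. V (\<phi> y - t)) + \<xi> * t) \<in> borel_measurable borel"
    by measurable
  show "0 \<le> real (card S) * C / 4"
    using C_nonneg by simp
  show "2 * (- (1/2) * (\<Sum>y\<in>S. V (\<phi> y - \<gamma>)) + \<xi> * \<gamma> - real (card S) * C / 4 * h\<^sup>2)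
        \<le> (- (1/2) * (\<Sum>y\<in>S. V (\<phi> y - (\<gamma> + h))) + \<xi> * (\<gamma> + h))
          + (- (1/2) * (\<Sum>y\<in>S. V (\<phi> y - (\<gamma> - h))) + \<xi> * (\<gamma> - h))" for h
    using sum_second_difference_le[OF diff1 diff2 upper2, where S = S and \<phi> = \<phi> and c = \<gamma> and h = h] by (simp add: algebra_simps)
qed

lemma nbrs_translate: "nbrs x = (\<lambda>z. z + x) ` nbrs 0"
proof -
  have "y \<in> nbrs x \<longleftrightarrow> y - x \<in> nbrs 0" for y
    by (simp add: nbrs_def)
  then show ?thesis
    by (auto intro: rev_image_eqI[where x = "_ - x"])
qed

lemma card_nbrs: "card (nbrs (x :: int ^ 'd)) = card (nbrs (0 :: int ^ 'd))"
  by (subst nbrs_translate) (simp add: card_image inj_on_def)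

theorem lemma3p1:
  fixes V :: "real \<Rightarrow> real" and A B C2 :: real
  assumes diff1: "\<forall>s. V differentiable (at s)"
    and diff2: "\<forall>s. deriv V differentiable (at s)"
    and cont2: "continuous_on UNIV (deriv (deriv V))"
    and even: "\<forall>s. V (- s) = V s"
    and A_pos: "A > 0"
    and lower: "\<forall>s. V s \<ge> A * s\<^sup>2 - B"
    and C2_pos: "C2 > 0"
    and upper2: "\<forall>s. deriv (deriv V) s \<le> C2"
  shows "\<exists>C > 0. \<forall>(x :: int ^ 'd) (\<gamma> :: real) (\<xi> :: real) (\<phi> :: int ^ 'd \<Rightarrow> real).
           (\<integral>\<^sup>+ t. ennreal (exp (- (1/2) * (\<Sum>y\<in>nbrs x. V (\<phi> y - t)) + \<xi> * t)) \<partial>lborel)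
           \<ge> ennreal (C * exp (- (1/2) * (\<Sum>y\<in>nbrs x. V (\<phi> y - \<gamma>)) + \<xi> * \<gamma>))"
proof (intro exI[of _ "exp (- (real (card (nbrs (0 :: int ^ 'd))) * C2 / 4))"] conjI allI)
  fix x :: "int ^ 'd" and \<gamma> \<xi> :: real and \<phi> :: "int ^ 'd \<Rightarrow> real"
  show "(\<integral>\<^sup>+ t. ennreal (exp (- (1/2) * (\<Sum>y\<in>nbrs x. V (\<phi> y - t)) + \<xi> * t)) \<partial>lborel)
        \<ge> ennreal (exp (- (real (card (nbrs (0 :: int ^ 'd))) * C2 / 4))
                   * exp (- (1/2) * (\<Sum>y\<in>nbrs x. V (\<phi> y - \<gamma>)) + \<xi> * \<gamma>))"
    using nn_integral_local_weight_ge[OF diff1 diff2 less_imp_le[OF C2_pos] upper2,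
        where S = "nbrs x" and \<phi> = \<phi> and \<gamma> = \<gamma> and \<xi> = \<xi>]
    unfolding card_nbrs[of x] by simp
qed simp

end
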